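(* Let $\boldsymbol\mu>\mathbf 0$ and assume $N\geq 2$ and every matrix in $\mathcal Z(\boldsymbol\mu)$ is irreducible. Run the following iteration: choose $\mathbf p^{(0)}\in\mathbb R^N$ with $\mathbf p^{(0)}>\mathbf 0$; for $k=0,1,2,\dots$ set $y_i^{(k)}=\max_{k_i\in\mathcal K_i}\big(\mathbf e_i^T-\mathbf a_i^{k_i}(\boldsymbol\mu)\big)\mathbf p^{(k)}$ for $i=1,\dots,N$, $\beta^{(k)}=\min_{1\le i\le N}p_i^{(k)}/y_i^{(k)}$, and $\mathbf p^{(k+1)}=\mathbf y^{(k)}/\|\mathbf y^{(k)}\|$. Then the sequence $(\beta^{(k)})_k$ is monotonically nondecreasing and bounded above by $1/\max_{\mathbf Z\in\mathcal Z(\boldsymbol\mu)}\lambda(\mathbf Z)=1/\max_{\mathbf G\in\mathcal G(\boldsymbol\mu)}\lambda(\mathbf I-\mathbf G)$; hence it converges.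
   Context: Multicast system: $N$ transmitters; transmitter $T_i$ has $K_i\geq1$ receivers $R_i^{k}$, $k\in\mathcal K_i=\{1,\dots,K_i\}$. Channel gains $g_{r_i^{k},t_j}\geq 0$ (from $T_j$ to $R_i^k$) with $g_{r_i^{k},t_i}>0$. For $\boldsymbol\mu\in\mathbb R^N$, $\mathbf a_i^{k}(\boldsymbol\mu)\in\mathbb R^{1\times N}$ is the row vector with $i$-th entry $1$ and $j$-th entry $-\mu_i g_{r_i^{k},t_j}/g_{r_i^{k},t_i}$ for $j\neq i$. $\mathcal G(\boldsymbol\mu)$ is the set of $N\times N$ matrices whose $i$-th row is $\mathbf a_i^{k_i}(\boldsymbol\mu)$ for some choice $k_i\in\mathcal K_i$, and $\mathcal Z(\boldsymbol\mu)=\{\mathbf I-\mathbf G:\mathbf G\in\mathcal G(\boldsymbol\mu)\}$ (a set of nonnegative matrices). $\mathbf e_i$ is the $i$-th standard basis column vector, $\|\cdot\|$ the Euclidean norm, $\lambda(\cdot)$ the Perron–Frobenius eigenvalue (spectral radius). *)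

theory Defs
  imports "HOL-Analysis.Analysis" "Jordan_Normal_Form.Spectral_Radius"
begin

text \<open>Indexing conventions: transmitters are 0,...,N-1; receivers of transmitter i are
  1,...,K i; g i k j is the gain from T_j to R_i^k; mu i is the i-th entry of mu.
  Vectors in R^N are functions nat => real, only arguments below N matter.\<close>

definition avec :: "(nat \<Rightarrow> nat \<Rightarrow> nat \<Rightarrow> real) \<Rightarrow> (nat \<Rightarrow> real) \<Rightarrow> nat \<Rightarrow> nat \<Rightarrow> nat \<Rightarrow> real" where
  "avec g mu i k j = (if j = i then 1 else - mu i * g i k j / g i k i)"

definition Gset :: "nat \<Rightarrow> (nat \<Rightarrow> nat) \<Rightarrow> (nat \<Rightarrow> nat \<Rightarrow> nat \<Rightarrow> real) \<Rightarrow> (nat \<Rightarrow> real) \<Rightarrow> real mat set" where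
  "Gset N K g mu = {mat N N (\<lambda>(i, j). avec g mu i (c i) j) | c. \<forall>i<N. c i \<in> {1..K i}}"

definition Zset :: "nat \<Rightarrow> (nat \<Rightarrow> nat) \<Rightarrow> (nat \<Rightarrow> nat \<Rightarrow> nat \<Rightarrow> real) \<Rightarrow> (nat \<Rightarrow> real) \<Rightarrow> real mat set" where
  "Zset N K g mu = {1\<^sub>m N - G | G. G \<in> Gset N K g mu}"

definition irreducible_mat :: "real mat \<Rightarrow> bool" where
  "irreducible_mat A = (\<not> (\<exists>S. S \<noteq> {} \<and> S \<subset> {0..<dim_row A} \<and>
      (\<forall>i\<in>S. \<forall>j\<in>{0..<dim_row A} - S. A $$ (i, j) = 0)))"

definition lam :: "real mat \<Rightarrow> real" where
  "lam Z = spectral_radius (map_mat complex_of_real Z)"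

definition evec :: "nat \<Rightarrow> nat \<Rightarrow> real" where
  "evec i j = (if j = i then 1 else 0)"

definition iter_y :: "nat \<Rightarrow> (nat \<Rightarrow> nat) \<Rightarrow> (nat \<Rightarrow> nat \<Rightarrow> nat \<Rightarrow> real) \<Rightarrow> (nat \<Rightarrow> real) \<Rightarrow> (nat \<Rightarrow> real) \<Rightarrow> nat \<Rightarrow> real" where
  "iter_y N K g mu p i = Max {(\<Sum>j<N. (evec i j - avec g mu i k j) * p j) | k. k \<in> {1..K i}}"

definition iter_beta :: "nat \<Rightarrow> (nat \<Rightarrow> nat) \<Rightarrow> (nat \<Rightarrow> nat \<Rightarrow> nat \<Rightarrow> real) \<Rightarrow> (nat \<Rightarrow> real) \<Rightarrow> (nat \<Rightarrow> real) \<Rightarrow> real" where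
  "iter_beta N K g mu p = Min {p i / iter_y N K g mu p i | i. i < N}"

definition vnorm :: "nat \<Rightarrow> (nat \<Rightarrow> real) \<Rightarrow> real" where
  "vnorm N x = sqrt (\<Sum>i<N. (x i)\<^sup>2)"

end

theory Submission
  imports Defs
begin

text \<open>The update \<open>T q = y\<close> is a coordinatewise maximum of the nonnegative linear maps
  \<open>Z q\<close>, \<open>Z \<in> Z(\<mu>)\<close>, hence monotone and positively homogeneous. With \<open>\<beta>(q) = min\<^sub>i q\<^sub>i / (T q)\<^sub>i\<close>
  we have \<open>\<beta>(q) T q \<le> q\<close>; applying \<open>T\<close> gives \<open>\<beta>(q) T (T q) \<le> T q\<close>, so \<open>\<beta>\<close> cannot decrease
  along the normalised iterates. Since also \<open>Z q \<le> T q \<le> q / \<beta>(q)\<close>, the Collatz-Wielandt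
  bound gives \<open>\<lambda>(Z) \<le> 1 / \<beta>(q)\<close> for every \<open>Z\<close>. Irreducibility keeps \<open>T q\<close> and \<open>\<lambda>(Z)\<close> positive,
  the latter because a nonnegative matrix with \<open>A p \<ge> 2 p\<close> has exponentially growing powers,
  which is impossible when its spectral radius is below \<open>1\<close>.\<close>

lemma eigenvalue_norm_le_if_mult_le:
  fixes A :: "real mat"
  assumes A: "A \<in> carrier_mat n n"
    and nonneg: "\<forall>i<n. \<forall>j<n. A $$ (i,j) \<ge> 0"
    and p_pos: "\<forall>i<n. p i > 0"
    and le: "\<forall>i<n. (\<Sum>j<n. A $$ (i,j) * p j) \<le> t * p i"
    and ev: "eigenvector (map_mat complex_of_real A) v e"
  shows "norm e \<le> t"
proof -
  have v: "v \<in> carrier_vec n" and v0: "v \<noteq> 0\<^sub>v n"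
    and Av: "map_mat complex_of_real A *\<^sub>v v = e \<cdot>\<^sub>v v"
    using ev A unfolding eigenvector_def by auto
  have "\<exists>j<n. v $ j \<noteq> 0"
  proof (rule ccontr)
    assume "\<not> ?thesis"
    hence "v = 0\<^sub>v n" using v by (intro eq_vecI) auto
    with v0 show False ..
  qed
  then obtain j where j: "j < n" "v $ j \<noteq> 0" by blast
  text \<open>Read the eigen-equation at an index maximising \<open>\<bar>v i\<bar> / p i\<close>.\<close>
  define r where "r i = norm (v $ i) / p i" for i
  define m where "m = Max (r ` {..<n})"
  have fin: "finite (r ` {..<n})" "r ` {..<n} \<noteq> {}" using j by auto
  obtain i0 where i0: "i0 < n" "r i0 = m" using Max_in[OF fin] unfolding m_def by auto
  have v_le: "norm (v $ l) \<le> m * p l" if "l < n" for l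
  proof -
    have "r l \<le> m" unfolding m_def using that fin by auto
    thus ?thesis using p_pos that unfolding r_def by (simp add: divide_le_eq)
  qed
  have "0 < r j" unfolding r_def using j p_pos by auto
  also have "r j \<le> m" unfolding m_def using j fin by auto
  finally have m_pos: "m > 0" .
  have v_i0: "norm (v $ i0) = m * p i0" using i0 p_pos unfolding r_def by (auto simp: field_simps)
  have "e * v $ i0 = (\<Sum>j<n. complex_of_real (A $$ (i0,j)) * v $ j)"
    using arg_cong[OF Av, of "\<lambda>w. w $ i0"] i0 v A
    by (auto simp: scalar_prod_def lessThan_atLeast0 intro!: sum.cong)
  hence "norm e * norm (v $ i0) = norm (\<Sum>j<n. complex_of_real (A $$ (i0,j)) * v $ j)"
    by (metis norm_mult)
  also have "\<dots> \<le> (\<Sum>j<n. A $$ (i0,j) * norm (v $ j))"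
    using nonneg i0 by (auto intro!: order.trans[OF norm_sum] sum_mono simp: norm_mult)
  also have "\<dots> \<le> (\<Sum>j<n. A $$ (i0,j) * (m * p j))"
    using nonneg i0 v_le by (intro sum_mono mult_left_mono) auto
  also have "\<dots> = m * (\<Sum>j<n. A $$ (i0,j) * p j)" by (simp add: sum_distrib_left mult_ac)
  also have "\<dots> \<le> m * (t * p i0)" using le i0 m_pos by (intro mult_left_mono) auto
  also have "\<dots> = t * norm (v $ i0)" using v_i0 by simp
  finally show ?thesis using v_i0 m_pos p_pos i0 by simp
qed

lemma lam_le_if_mult_le:
  fixes A :: "real mat"
  assumes A: "A \<in> carrier_mat n n" and n: "n > 0"
    and nonneg: "\<forall>i<n. \<forall>j<n. A $$ (i,j) \<ge> 0"
    and p_pos: "\<forall>i<n. p i > 0"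
    and le: "\<forall>i<n. (\<Sum>j<n. A $$ (i,j) * p j) \<le> t * p i"
  shows "lam A \<le> t"
proof -
  let ?Ac = "map_mat complex_of_real A"
  obtain e where "e \<in> spectrum ?Ac" and lam: "lam A = norm e"
    using spectral_radius_mem_max(1)[of ?Ac n] A n unfolding lam_def by auto
  then obtain v where "eigenvector ?Ac v e" unfolding spectrum_def eigenvalue_def by auto
  with eigenvalue_norm_le_if_mult_le[OF A nonneg p_pos le] show ?thesis using lam by simp
qed

lemma eigenvector_smult_mat:
  fixes B :: "'a::field mat"
  assumes B: "B \<in> carrier_mat n n" and d: "d \<noteq> 0" and ev: "eigenvector (d \<cdot>\<^sub>m B) v e"
  shows "eigenvector B v (e / d)"
proof -
  have v: "v \<in> carrier_vec n" and v0: "v \<noteq> 0\<^sub>v n" and Bv: "(d \<cdot>\<^sub>m B) *\<^sub>v v = e \<cdot>\<^sub>v v"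
    using ev B unfolding eigenvector_def by auto
  have "B *\<^sub>v v = (e / d) \<cdot>\<^sub>v v"
  proof (rule eq_vecI)
    fix i assume "i < dim_vec ((e / d) \<cdot>\<^sub>v v)"
    hence i: "i < n" using v by simp
    have "d * (B *\<^sub>v v) $ i = e * v $ i"
      using arg_cong[OF Bv, of "\<lambda>w. w $ i"] i B v
      by (simp add: scalar_prod_def sum_distrib_left mult.assoc)
    thus "(B *\<^sub>v v) $ i = ((e / d) \<cdot>\<^sub>v v) $ i" using i v d by (simp add: field_simps)
  qed (use B v in auto)
  thus ?thesis using v v0 B unfolding eigenvector_def by auto
qed

lemma lam_smult_le:
  fixes A :: "real mat"
  assumes A: "A \<in> carrier_mat n n" and n: "n > 0" and c: "c > 0"
  shows "lam (c \<cdot>\<^sub>m A) \<le> c * lam A"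
proof -
  let ?Ac = "map_mat complex_of_real A"
  have Ac: "?Ac \<in> carrier_mat n n" using A by simp
  have cA: "map_mat complex_of_real (c \<cdot>\<^sub>m A) = complex_of_real c \<cdot>\<^sub>m ?Ac"
    by (rule eq_matI) auto
  obtain e where e: "e \<in> spectrum (complex_of_real c \<cdot>\<^sub>m ?Ac)" and lam: "lam (c \<cdot>\<^sub>m A) = norm e"
    using spectral_radius_mem_max(1)[of "complex_of_real c \<cdot>\<^sub>m ?Ac" n] Ac n
    unfolding lam_def cA by auto
  then obtain v where "eigenvector (complex_of_real c \<cdot>\<^sub>m ?Ac) v e"
    unfolding spectrum_def eigenvalue_def by auto
  hence "eigenvector ?Ac v (e / complex_of_real c)"
    using eigenvector_smult_mat[OF Ac] c by simp
  hence "e / complex_of_real c \<in> spectrum ?Ac" unfolding spectrum_def eigenvalue_def by auto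
  hence "norm (e / complex_of_real c) \<le> lam A"
    unfolding lam_def using spectral_radius_mem_max(2)[OF Ac n] by auto
  thus ?thesis using lam c by (simp add: norm_divide field_simps)
qed

lemma mat_pow_bounded_if_lam_less_1:
  fixes A :: "real mat"
  assumes A: "A \<in> carrier_mat n n" and lt: "lam A < 1"
  obtains C where "\<And>k i j. i < n \<Longrightarrow> j < n \<Longrightarrow> \<bar>(A ^\<^sub>m k) $$ (i,j)\<bar> \<le> C"
proof -
  let ?Ac = "map_mat complex_of_real A"
  obtain C where C: "\<And>k. norm_bound (?Ac ^\<^sub>m k) C"
    using spectral_radius_jnf_norm_bound_less_1_upper_triangular[of ?Ac n] A lt
    unfolding lam_def by auto
  have "\<bar>(A ^\<^sub>m k) $$ (i,j)\<bar> \<le> C" if "i < n" "j < n" for k i j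
  proof -
    have "?Ac ^\<^sub>m k = map_mat complex_of_real (A ^\<^sub>m k)"
      by (rule of_real_hom.mat_hom_pow[OF A, symmetric])
    with C[of k] that A show ?thesis unfolding norm_bound_def by auto
  qed
  thus ?thesis by (rule that)
qed

lemma index_mat_pow_Suc:
  assumes A: "A \<in> carrier_mat n n" and "i < n" "j < n"
  shows "(A ^\<^sub>m Suc k) $$ (i,j) = (\<Sum>l<n. (A ^\<^sub>m k) $$ (i,l) * A $$ (l,j))"
proof -
  have "A ^\<^sub>m k \<in> carrier_mat n n" using A by simp
  thus ?thesis using assms by (auto simp: scalar_prod_def lessThan_atLeast0 intro!: sum.cong)
qed

lemma mat_pow_nonneg:
  fixes A :: "real mat"
  assumes A: "A \<in> carrier_mat n n" and nonneg: "\<forall>i<n. \<forall>j<n. A $$ (i,j) \<ge> 0"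
  shows "\<forall>i<n. \<forall>j<n. (A ^\<^sub>m k) $$ (i,j) \<ge> 0"
proof (induction k)
  case 0
  show ?case using A by simp
next
  case (Suc k)
  show ?case
  proof (intro allI impI)
    fix i j assume ij: "i < n" "j < n"
    have "(A ^\<^sub>m Suc k) $$ (i,j) = (\<Sum>l<n. (A ^\<^sub>m k) $$ (i,l) * A $$ (l,j))"
      using index_mat_pow_Suc[OF A ij] .
    also have "\<dots> \<ge> 0" using Suc.IH nonneg ij by (intro sum_nonneg) auto
    finally show "(A ^\<^sub>m Suc k) $$ (i,j) \<ge> 0" .
  qed
qed

lemma mat_pow_mult_ge:
  fixes A :: "real mat"
  assumes A: "A \<in> carrier_mat n n" and nonneg: "\<forall>i<n. \<forall>j<n. A $$ (i,j) \<ge> 0"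
    and a: "a \<ge> 0" and ge: "\<forall>i<n. (\<Sum>j<n. A $$ (i,j) * p j) \<ge> a * p i"
  shows "\<forall>i<n. (\<Sum>j<n. (A ^\<^sub>m k) $$ (i,j) * p j) \<ge> a ^ k * p i"
proof (induction k)
  case 0
  have "(\<Sum>j<n. (A ^\<^sub>m 0) $$ (i,j) * p j) = (\<Sum>j<n. if j = i then p i else 0)" if "i < n" for i
    using A that by (intro sum.cong) auto
  then show ?case by simp
next
  case (Suc k)
  show ?case
  proof (intro allI impI)
    fix i assume i: "i < n"
    have "(\<Sum>j<n. (A ^\<^sub>m Suc k) $$ (i,j) * p j)
        = (\<Sum>j<n. \<Sum>l<n. (A ^\<^sub>m k) $$ (i,l) * A $$ (l,j) * p j)"
      using i by (intro sum.cong) (auto simp only: lessThan_iff index_mat_pow_Suc[OF A] sum_distrib_right)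
    also have "\<dots> = (\<Sum>l<n. (A ^\<^sub>m k) $$ (i,l) * (\<Sum>j<n. A $$ (l,j) * p j))"
      by (subst sum.swap) (simp add: sum_distrib_left mult.assoc)
    also have "\<dots> \<ge> (\<Sum>l<n. (A ^\<^sub>m k) $$ (i,l) * (a * p l))"
      using mat_pow_nonneg[OF A nonneg] i ge by (intro sum_mono mult_left_mono) auto
    also have "(\<Sum>l<n. (A ^\<^sub>m k) $$ (i,l) * (a * p l)) = a * (\<Sum>l<n. (A ^\<^sub>m k) $$ (i,l) * p l)"
      by (simp add: sum_distrib_left mult.left_commute)
    also have "\<dots> \<ge> a * (a ^ k * p i)"
      using Suc.IH i a by (simp add: mult_left_mono)
    finally show "(\<Sum>j<n. (A ^\<^sub>m Suc k) $$ (i,j) * p j) \<ge> a ^ Suc k * p i"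
      by (simp add: mult.assoc)
  qed
qed

lemma lam_ge_1_if_mult_ge:
  fixes A :: "real mat"
  assumes A: "A \<in> carrier_mat n n" and n: "n > 0"
    and nonneg: "\<forall>i<n. \<forall>j<n. A $$ (i,j) \<ge> 0"
    and p_pos: "\<forall>i<n. p i > 0"
    and a: "a > 1" and ge: "\<forall>i<n. (\<Sum>j<n. A $$ (i,j) * p j) \<ge> a * p i"
  shows "lam A \<ge> 1"
proof (rule ccontr)
  assume "\<not> lam A \<ge> 1"
  then obtain C where C: "\<And>k i j. i < n \<Longrightarrow> j < n \<Longrightarrow> \<bar>(A ^\<^sub>m k) $$ (i,j)\<bar> \<le> C"
    using mat_pow_bounded_if_lam_less_1[OF A] by force
  have p0: "p 0 > 0" using p_pos n by simp
  have growth: "a ^ k * p 0 \<le> C * (\<Sum>j<n. p j)" for k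
  proof -
    have "\<forall>i<n. (\<Sum>j<n. (A ^\<^sub>m k) $$ (i,j) * p j) \<ge> a ^ k * p i"
      using a by (intro mat_pow_mult_ge[OF A nonneg _ ge]) simp
    hence "a ^ k * p 0 \<le> (\<Sum>j<n. (A ^\<^sub>m k) $$ (0,j) * p j)" using n by simp
    also have "\<dots> \<le> (\<Sum>j<n. C * p j)"
      using C[of 0] n p_pos by (intro sum_mono mult_right_mono) (auto simp: abs_le_iff less_imp_le)
    finally show ?thesis by (simp add: sum_distrib_left)
  qed
  obtain k where "C * (\<Sum>j<n. p j) / p 0 < a ^ k"
    using real_arch_pow[OF a] by blast
  hence "C * (\<Sum>j<n. p j) < a ^ k * p 0" using p0 by (simp add: divide_less_eq)
  with growth[of k] show False by simp
qed

lemma lam_pos_if_mult_pos: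
  fixes A :: "real mat"
  assumes A: "A \<in> carrier_mat n n" and n: "n > 0"
    and nonneg: "\<forall>i<n. \<forall>j<n. A $$ (i,j) \<ge> 0"
    and p_pos: "\<forall>i<n. p i > 0"
    and pos: "\<forall>i<n. (\<Sum>j<n. A $$ (i,j) * p j) > 0"
  shows "lam A > 0"
proof -
  define a where "a = Min ((\<lambda>i. (\<Sum>j<n. A $$ (i,j) * p j) / p i) ` {..<n})"
  have fin: "finite ((\<lambda>i. (\<Sum>j<n. A $$ (i,j) * p j) / p i) ` {..<n})"
    "(\<lambda>i. (\<Sum>j<n. A $$ (i,j) * p j) / p i) ` {..<n} \<noteq> {}" using n by auto
  have a: "a > 0" using Min_in[OF fin] pos p_pos unfolding a_def by auto
  define M where "M = (2 / a) \<cdot>\<^sub>m A"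
  have M: "M \<in> carrier_mat n n" using A unfolding M_def by simp
  have M_nonneg: "\<forall>i<n. \<forall>j<n. M $$ (i,j) \<ge> 0" using A nonneg a unfolding M_def by auto
  have M_ge: "\<forall>i<n. (\<Sum>j<n. M $$ (i,j) * p j) \<ge> 2 * p i"
  proof (intro allI impI)
    fix i assume i: "i < n"
    have "a \<le> (\<Sum>j<n. A $$ (i,j) * p j) / p i" unfolding a_def using fin i by auto
    hence "2 * p i \<le> 2 / a * (\<Sum>j<n. A $$ (i,j) * p j)"
      using p_pos i a by (simp add: field_simps)
    also have "\<dots> = (\<Sum>j<n. M $$ (i,j) * p j)"
      using i A unfolding M_def by (simp add: sum_distrib_left mult_ac)
    finally show "(\<Sum>j<n. M $$ (i,j) * p j) \<ge> 2 * p i" .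
  qed
  have "1 \<le> lam M" by (rule lam_ge_1_if_mult_ge[OF M n M_nonneg p_pos _ M_ge]) simp
  also have "\<dots> \<le> 2 / a * lam A" unfolding M_def by (rule lam_smult_le[OF A n]) (use a in simp)
  finally show ?thesis using a by (simp add: field_simps)
qed

lemma irreducible_mat_offdiag_nonzero:
  assumes irr: "irreducible_mat A" and two: "dim_row A \<ge> 2" and i: "i < dim_row A"
  obtains j where "j < dim_row A" "j \<noteq> i" "A $$ (i,j) \<noteq> 0"
proof -
  define j0 :: nat where "j0 = (if i = 0 then 1 else 0)"
  have j0: "j0 < dim_row A" "j0 \<noteq> i" using two i unfolding j0_def by auto
  have proper: "{i} \<subset> {0..<dim_row A}"
  proof
    show "{i} \<subseteq> {0..<dim_row A}" using i by simp
    have "j0 \<in> {0..<dim_row A}" "j0 \<notin> {i}" using j0 by simp_all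
    thus "{i} \<noteq> {0..<dim_row A}" by blast
  qed
  have "\<exists>j\<in>{0..<dim_row A} - {i}. A $$ (i,j) \<noteq> 0"
  proof (rule ccontr)
    assume "\<not> ?thesis"
    hence "\<exists>S. S \<noteq> {} \<and> S \<subset> {0..<dim_row A} \<and>
        (\<forall>i\<in>S. \<forall>j\<in>{0..<dim_row A} - S. A $$ (i,j) = 0)"
      using proper by (intro exI[of _ "{i}"]) auto
    with irr show False unfolding irreducible_mat_def by (rule notE)
  qed
  then obtain j where j: "j \<in> {0..<dim_row A} - {i}" "A $$ (i,j) \<noteq> 0" ..
  show ?thesis using j by (intro that) auto
qed

lemma irreducible_mult_pos:
  fixes A :: "real mat"
  assumes A: "A \<in> carrier_mat n n" and two: "n \<ge> 2" and irr: "irreducible_mat A"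
    and nonneg: "\<forall>i<n. \<forall>j<n. A $$ (i,j) \<ge> 0"
    and p_pos: "\<forall>i<n. p i > 0" and i: "i < n"
  shows "(\<Sum>j<n. A $$ (i,j) * p j) > 0"
proof -
  obtain j where j: "j < n" "A $$ (i,j) \<noteq> 0"
    using irreducible_mat_offdiag_nonzero[OF irr, of i] A two i by auto
  have "A $$ (i,j) > 0" using j nonneg i by (auto simp: less_le)
  hence "0 < A $$ (i,j) * p j" using j p_pos by simp
  also have "\<dots> \<le> (\<Sum>j<n. A $$ (i,j) * p j)"
    using j nonneg p_pos i by (intro member_le_sum) (auto simp: less_imp_le)
  finally show ?thesis .
qed

lemma lam_pos_if_irreducible:
  fixes A :: "real mat"
  assumes A: "A \<in> carrier_mat n n" and two: "n \<ge> 2" and irr: "irreducible_mat A"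
    and nonneg: "\<forall>i<n. \<forall>j<n. A $$ (i,j) \<ge> 0"
  shows "lam A > 0"
proof (rule lam_pos_if_mult_pos[OF A _ nonneg])
  show "n > 0" using two by simp
  show "\<forall>i<n. (1::real) > 0" by simp
  show "\<forall>i<n. (\<Sum>j<n. A $$ (i,j) * 1) > 0"
    using irreducible_mult_pos[OF A two irr nonneg, of "\<lambda>_. 1"] by simp
qed

lemma vnorm_pos:
  assumes "i < N" and "x i \<noteq> 0"
  shows "vnorm N x > 0"
proof -
  have "0 < (x i)\<^sup>2" using assms by simp
  also have "\<dots> \<le> (\<Sum>j<N. (x j)\<^sup>2)" using assms by (intro member_le_sum) auto
  finally show ?thesis unfolding vnorm_def by simp
qed

locale monotone_homogeneous_map =
  fixes N :: nat and T :: "(nat \<Rightarrow> real) \<Rightarrow> nat \<Rightarrow> real"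
  assumes N_pos: "N > 0"
    and mono: "\<forall>j<N. q j \<le> q' j \<Longrightarrow> i < N \<Longrightarrow> T q i \<le> T q' i"
    and homogeneous: "a > 0 \<Longrightarrow> i < N \<Longrightarrow> T (\<lambda>j. a * q j) i = a * T q i"
    and positive: "\<forall>j<N. q j > 0 \<Longrightarrow> i < N \<Longrightarrow> T q i > 0"
begin

definition ratio_min :: "(nat \<Rightarrow> real) \<Rightarrow> real" where
  "ratio_min q = Min {q i / T q i | i. i < N}"

lemma T_cong: "\<forall>j<N. q j = q' j \<Longrightarrow> i < N \<Longrightarrow> T q i = T q' i"
  by (intro antisym mono) auto

lemma ratio_min_eq: "ratio_min q = Min ((\<lambda>i. q i / T q i) ` {..<N})"
  unfolding ratio_min_def by (rule arg_cong[where f = Min]) auto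

lemma ratio_min_le: "i < N \<Longrightarrow> ratio_min q \<le> q i / T q i"
  unfolding ratio_min_eq by (intro Min_le) auto

lemma ratio_min_attained:
  obtains i where "i < N" "ratio_min q = q i / T q i"
proof -
  have "ratio_min q \<in> (\<lambda>i. q i / T q i) ` {..<N}"
    unfolding ratio_min_eq using N_pos by (intro Min_in) auto
  thus ?thesis using that by auto
qed

lemma ratio_min_pos:
  assumes "\<forall>j<N. q j > 0"
  shows "ratio_min q > 0"
proof -
  obtain i where "i < N" "ratio_min q = q i / T q i" by (rule ratio_min_attained)
  thus ?thesis using assms positive[OF assms] by simp
qed

lemma ratio_min_mult_le:
  assumes q: "\<forall>j<N. q j > 0" and i: "i < N"
  shows "ratio_min q * T q i \<le> q i"
  using ratio_min_le[OF i, of q] positive[OF q i] by (simp add: le_divide_eq)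

lemma vnorm_pos_if_pos:
  assumes "\<forall>j<N. q j > 0"
  shows "vnorm N (T q) > 0"
  using positive[OF assms N_pos] by (intro vnorm_pos[OF N_pos]) simp

lemma ratio_min_le_normalized:
  assumes q: "\<forall>j<N. q j > 0" and s: "s > 0" and q': "\<forall>j<N. q' j = T q j / s"
  shows "ratio_min q \<le> ratio_min q'"
proof -
  let ?b = "ratio_min q"
  obtain i where i: "i < N" "ratio_min q' = q' i / T q' i" by (rule ratio_min_attained)
  have Tq_pos: "\<forall>j<N. T q j > 0" using positive[OF q] by blast
  have "T q' i = T (\<lambda>j. (1 / s) * T q j) i" using q' i by (intro T_cong) auto
  also have "\<dots> = (1 / s) * T (T q) i" by (rule homogeneous) (use s i in auto)
  finally have Tq': "T q' i = T (T q) i / s" by simp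
  text \<open>Monotonicity and homogeneity turn \<open>?b * T q \<le> q\<close> into \<open>?b * T (T q) \<le> T q\<close>.\<close>
  have "?b * T (T q) i = T (\<lambda>j. ?b * T q j) i"
    using homogeneous[OF ratio_min_pos[OF q] i(1)] by simp
  also have "\<dots> \<le> T q i" using ratio_min_mult_le[OF q] i(1) by (intro mono) auto
  finally have "?b \<le> T q i / T (T q) i" using positive[OF Tq_pos i(1)] by (simp add: le_divide_eq)
  also have "\<dots> = ratio_min q'"
    using i q' Tq' s positive[OF Tq_pos i(1)] by (simp add: field_simps)
  finally show ?thesis .
qed

context
  fixes p :: "nat \<Rightarrow> nat \<Rightarrow> real"
  assumes p0_pos: "\<forall>i<N. p 0 i > 0"
    and p_step: "\<forall>k. \<forall>i<N. p (Suc k) i = T (p k) i / vnorm N (T (p k))"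
begin

lemma normalized_iterates_pos: "\<forall>i<N. p k i > 0"
proof (induction k)
  case 0
  show ?case by (rule p0_pos)
next
  case (Suc k)
  thus ?case using p_step positive[OF Suc.IH] vnorm_pos_if_pos[OF Suc.IH] by simp
qed

lemma ratio_min_normalized_iterates_mono: "mono (\<lambda>k. ratio_min (p k))"
proof (rule incseq_SucI)
  fix k
  show "ratio_min (p k) \<le> ratio_min (p (Suc k))"
    using p_step by (intro ratio_min_le_normalized[OF normalized_iterates_pos
        vnorm_pos_if_pos[OF normalized_iterates_pos]]) blast
qed

end

end

locale multicast =
  fixes N :: nat and K :: "nat \<Rightarrow> nat" and g :: "nat \<Rightarrow> nat \<Rightarrow> nat \<Rightarrow> real"
    and mu :: "nat \<Rightarrow> real"
  assumes K_pos: "\<forall>i<N. K i \<ge> 1"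
    and g_nonneg: "\<forall>i<N. \<forall>k\<in>{1..K i}. \<forall>j<N. g i k j \<ge> 0"
    and g_diag_pos: "\<forall>i<N. \<forall>k\<in>{1..K i}. g i k i > 0"
    and mu_pos: "\<forall>i<N. mu i > 0"
begin

definition zcoef :: "nat \<Rightarrow> nat \<Rightarrow> nat \<Rightarrow> real" where
  "zcoef i k j = evec i j - avec g mu i k j"

definition selections :: "(nat \<Rightarrow> nat) set" where
  "selections = {c. \<forall>i<N. c i \<in> {1..K i}}"

definition Zmat :: "(nat \<Rightarrow> nat) \<Rightarrow> real mat" where
  "Zmat c = mat N N (\<lambda>(i, j). zcoef i (c i) j)"

lemma zcoef_nonneg: "i < N \<Longrightarrow> k \<in> {1..K i} \<Longrightarrow> j < N \<Longrightarrow> zcoef i k j \<ge> 0"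
  using g_nonneg g_diag_pos mu_pos unfolding zcoef_def evec_def avec_def
  by (auto intro!: divide_nonneg_pos)

lemma Zmat_carrier: "Zmat c \<in> carrier_mat N N"
  unfolding Zmat_def by simp

lemma index_Zmat: "i < N \<Longrightarrow> j < N \<Longrightarrow> Zmat c $$ (i,j) = zcoef i (c i) j"
  unfolding Zmat_def by simp

lemma Zmat_nonneg: "c \<in> selections \<Longrightarrow> \<forall>i<N. \<forall>j<N. Zmat c $$ (i,j) \<ge> 0"
  by (simp add: index_Zmat selections_def zcoef_nonneg)

lemma const_1_selection: "(\<lambda>_. 1) \<in> selections"
  using K_pos unfolding selections_def by auto

lemma Zset_eq: "Zset N K g mu = Zmat ` selections"
proof -
  have Zmat_eq: "Zmat c = 1\<^sub>m N - mat N N (\<lambda>(i, j). avec g mu i (c i) j)" for c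
    unfolding Zmat_def zcoef_def by (rule eq_matI) (auto simp: evec_def)
  show ?thesis unfolding Zset_def Gset_def selections_def Zmat_eq by blast
qed

lemma finite_Zset: "finite (Zset N K g mu)"
proof -
  have "Zmat ` selections \<subseteq> Zmat ` (Pi\<^sub>E {..<N} (\<lambda>i. {1..K i}))"
  proof
    fix Z assume "Z \<in> Zmat ` selections"
    then obtain c where c: "c \<in> selections" and Z: "Z = Zmat c" by blast
    have "Zmat c = Zmat (restrict c {..<N})"
      unfolding Zmat_def by (rule eq_matI) auto
    moreover have "restrict c {..<N} \<in> Pi\<^sub>E {..<N} (\<lambda>i. {1..K i})"
      using c unfolding selections_def by auto
    ultimately show "Z \<in> Zmat ` (Pi\<^sub>E {..<N} (\<lambda>i. {1..K i}))" using Z by blast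
  qed
  thus ?thesis unfolding Zset_eq by (rule finite_subset) (intro finite_imageI finite_PiE; simp)
qed

lemma iter_y_eq: "iter_y N K g mu q i = Max ((\<lambda>k. \<Sum>j<N. zcoef i k j * q j) ` {1..K i})"
  unfolding iter_y_def zcoef_def by (rule arg_cong[where f = Max]) auto

lemma iter_y_ge: "k \<in> {1..K i} \<Longrightarrow> (\<Sum>j<N. zcoef i k j * q j) \<le> iter_y N K g mu q i"
  unfolding iter_y_eq by (intro Max_ge) auto

lemma iter_y_attained:
  assumes "i < N"
  obtains k where "k \<in> {1..K i}" "iter_y N K g mu q i = (\<Sum>j<N. zcoef i k j * q j)"
proof -
  have "iter_y N K g mu q i \<in> (\<lambda>k. \<Sum>j<N. zcoef i k j * q j) ` {1..K i}"
    unfolding iter_y_eq using K_pos assms by (intro Max_in) auto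
  thus ?thesis using that by auto
qed

lemma iter_y_mono:
  assumes le: "\<forall>j<N. q j \<le> q' j" and i: "i < N"
  shows "iter_y N K g mu q i \<le> iter_y N K g mu q' i"
proof -
  obtain k where k: "k \<in> {1..K i}" "iter_y N K g mu q i = (\<Sum>j<N. zcoef i k j * q j)"
    using iter_y_attained[OF i] .
  have "(\<Sum>j<N. zcoef i k j * q j) \<le> (\<Sum>j<N. zcoef i k j * q' j)"
    using le i k zcoef_nonneg by (intro sum_mono mult_left_mono) auto
  also have "\<dots> \<le> iter_y N K g mu q' i" by (rule iter_y_ge[OF k(1)])
  finally show ?thesis using k by simp
qed

lemma iter_y_homogeneous:
  assumes a: "a > 0" and i: "i < N"
  shows "iter_y N K g mu (\<lambda>j. a * q j) i = a * iter_y N K g mu q i"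
proof -
  have "iter_y N K g mu (\<lambda>j. a * q j) i
      = Max ((*) a ` (\<lambda>k. \<Sum>j<N. zcoef i k j * q j) ` {1..K i})"
    unfolding iter_y_eq image_image by (simp add: sum_distrib_left mult.left_commute)
  also have "\<dots> = a * iter_y N K g mu q i"
    unfolding iter_y_eq using K_pos i a
    by (intro mono_Max_commute[symmetric]) (auto intro: monoI mult_left_mono)
  finally show ?thesis .
qed

lemma Zmat_mult_le_iter_y:
  "c \<in> selections \<Longrightarrow> i < N \<Longrightarrow> (\<Sum>j<N. Zmat c $$ (i,j) * q j) \<le> iter_y N K g mu q i"
  using iter_y_ge[of "c i" i q] by (simp add: index_Zmat selections_def)

context
  assumes N_ge: "N \<ge> 2" and irred: "\<forall>Z\<in>Zset N K g mu. irreducible_mat Z"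
begin

lemma iter_y_pos:
  assumes q: "\<forall>j<N. q j > 0" and i: "i < N"
  shows "iter_y N K g mu q i > 0"
proof -
  have irr: "irreducible_mat (Zmat (\<lambda>_. 1))"
    using irred const_1_selection unfolding Zset_eq by blast
  have "0 < (\<Sum>j<N. Zmat (\<lambda>_. 1) $$ (i,j) * q j)"
    by (rule irreducible_mult_pos[OF Zmat_carrier N_ge irr Zmat_nonneg[OF const_1_selection] q i])
  also have "\<dots> \<le> iter_y N K g mu q i" by (rule Zmat_mult_le_iter_y[OF const_1_selection i])
  finally show ?thesis .
qed

lemma monotone_homogeneous_iter_y: "monotone_homogeneous_map N (iter_y N K g mu)"
  using N_ge by unfold_locales (auto intro: iter_y_mono iter_y_homogeneous iter_y_pos)

lemma iter_beta_eq_ratio_min: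
  "iter_beta N K g mu = monotone_homogeneous_map.ratio_min N (iter_y N K g mu)"
proof -
  interpret monotone_homogeneous_map N "iter_y N K g mu" by (rule monotone_homogeneous_iter_y)
  show ?thesis by (simp add: fun_eq_iff iter_beta_def ratio_min_def)
qed

lemma lam_Zset_le_inverse_iter_beta:
  assumes Z: "Z \<in> Zset N K g mu" and q: "\<forall>j<N. q j > 0"
  shows "lam Z \<le> 1 / iter_beta N K g mu q"
proof -
  interpret monotone_homogeneous_map N "iter_y N K g mu" by (rule monotone_homogeneous_iter_y)
  obtain c where c: "c \<in> selections" and Z: "Z = Zmat c" using Z unfolding Zset_eq by auto
  show ?thesis unfolding Z iter_beta_eq_ratio_min
  proof (rule lam_le_if_mult_le[OF Zmat_carrier N_pos Zmat_nonneg[OF c] q], intro allI impI)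
    fix i assume i: "i < N"
    have "(\<Sum>j<N. Zmat c $$ (i,j) * q j) \<le> iter_y N K g mu q i"
      by (rule Zmat_mult_le_iter_y[OF c i])
    also have "\<dots> \<le> q i / ratio_min q"
      using ratio_min_mult_le[OF q i] by (simp add: pos_le_divide_eq[OF ratio_min_pos[OF q]] mult_ac)
    finally show "(\<Sum>j<N. Zmat c $$ (i,j) * q j) \<le> 1 / ratio_min q * q i" by simp
  qed
qed

lemma Max_lam_Zset_pos: "Max (lam ` Zset N K g mu) > 0"
proof -
  have Z: "Zmat (\<lambda>_. 1) \<in> Zset N K g mu" using const_1_selection unfolding Zset_eq by blast
  have "0 < lam (Zmat (\<lambda>_. 1))"
    using Z irred Zmat_nonneg[OF const_1_selection]
    by (intro lam_pos_if_irreducible[OF Zmat_carrier N_ge]) auto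
  also have "\<dots> \<le> Max (lam ` Zset N K g mu)" using Z finite_Zset by simp
  finally show ?thesis .
qed

lemma iter_beta_le_inverse_Max_lam:
  assumes q: "\<forall>j<N. q j > 0"
  shows "iter_beta N K g mu q \<le> 1 / Max (lam ` Zset N K g mu)"
proof -
  interpret monotone_homogeneous_map N "iter_y N K g mu" by (rule monotone_homogeneous_iter_y)
  have "Max (lam ` Zset N K g mu) \<in> lam ` Zset N K g mu"
    using finite_Zset const_1_selection unfolding Zset_eq by (intro Max_in) auto
  hence "Max (lam ` Zset N K g mu) \<le> 1 / iter_beta N K g mu q"
    using lam_Zset_le_inverse_iter_beta[OF _ q] by auto
  thus ?thesis using Max_lam_Zset_pos ratio_min_pos[OF q]
    unfolding iter_beta_eq_ratio_min by (simp add: field_simps)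
qed

end

end

theorem lemma3:
  fixes N :: nat and K :: "nat \<Rightarrow> nat" and g :: "nat \<Rightarrow> nat \<Rightarrow> nat \<Rightarrow> real"
    and mu :: "nat \<Rightarrow> real" and p :: "nat \<Rightarrow> nat \<Rightarrow> real"
  assumes K_pos: "\<forall>i<N. K i \<ge> 1"
    and g_nonneg: "\<forall>i<N. \<forall>k\<in>{1..K i}. \<forall>j<N. g i k j \<ge> 0"
    and g_diag_pos: "\<forall>i<N. \<forall>k\<in>{1..K i}. g i k i > 0"
    and mu_pos: "\<forall>i<N. mu i > 0"
    and N_ge: "N \<ge> 2"
    and irred: "\<forall>Z\<in>Zset N K g mu. irreducible_mat Z"
    and p0_pos: "\<forall>i<N. p 0 i > 0"
    and p_step: "\<forall>k. \<forall>i<N. p (Suc k) i =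
        iter_y N K g mu (p k) i / vnorm N (iter_y N K g mu (p k))"
  shows "mono (\<lambda>k. iter_beta N K g mu (p k))
    \<and> (\<forall>k. iter_beta N K g mu (p k) \<le> 1 / Max (lam ` Zset N K g mu))
    \<and> Max (lam ` Zset N K g mu) = Max ((\<lambda>G. lam (1\<^sub>m N - G)) ` Gset N K g mu)
    \<and> convergent (\<lambda>k. iter_beta N K g mu (p k))"
proof -
  interpret multicast N K g mu using K_pos g_nonneg g_diag_pos mu_pos by unfold_locales
  interpret monotone_homogeneous_map N "iter_y N K g mu"
    by (rule monotone_homogeneous_iter_y[OF N_ge irred])
  let ?beta = "\<lambda>k. iter_beta N K g mu (p k)" and ?M = "Max (lam ` Zset N K g mu)"
  have mono: "mono ?beta" unfolding iter_beta_eq_ratio_min[OF N_ge irred]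
    by (rule ratio_min_normalized_iterates_mono[OF p0_pos p_step])
  have bound: "\<forall>k. ?beta k \<le> 1 / ?M"
    using iter_beta_le_inverse_Max_lam[OF N_ge irred normalized_iterates_pos[OF p0_pos p_step]]
    by blast
  have "convergent ?beta"
    using incseq_convergent[OF mono, of "1 / ?M"] bound unfolding convergent_def by blast
  moreover have "lam ` Zset N K g mu = (\<lambda>G. lam (1\<^sub>m N - G)) ` Gset N K g mu"
    unfolding Zset_def by auto
  ultimately show ?thesis using mono bound by simp
qed

end
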